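(* Let $x_1\le x_2\le\cdots$ be a sequence and let $x_\ell$ be a target element. Suppose the search accesses the sequence only through comparisons with $x_\ell$, and each comparison independently gives the wrong answer with probability at most a fixed constant less than $1/2$. Then for every constant $Q<1/2$ one can find an index $r$ with $\ell\le r\le 2\ell$, with probability at least $1-Q$, using $O(\lg(\ell/Q))$ comparisons.
   Context: This is the noisy exponential search problem: the goal is to locate $x_\ell$ up to a factor-two overshoot, in the style of exponential search, when comparisons are unreliable. *)

theory Defs
  imports "HOL-Probability.Probability"
begin

text \<open>A deterministic adaptive search strategy: given the list of answers received so far,
  it either queries an index (Inl i: compare x_i with the target x_l) or stops and
  outputs an index (Inr r). A randomized algorithm is a pmf over such strategies.\<close>
type_synonym strategy = "bool list \<Rightarrow> nat + nat"

text \<open>Execution with a budget of at most n comparisons. The target has index l; the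
  correct answer to query i is "x_i is at or beyond the target x_l", i.e. l \<le> i.
  The k-th comparison (k = number of earlier comparisons), on index i, is independently
  wrong with probability err k i. Result Some r: stopped with output r after at most
  n comparisons; None: budget exhausted.\<close>
fun exec :: "nat \<Rightarrow> strategy \<Rightarrow> nat \<Rightarrow> (nat \<Rightarrow> nat \<Rightarrow> real) \<Rightarrow> bool list \<Rightarrow> nat option pmf" where
  "exec 0 s l err h = (case s h of Inr r \<Rightarrow> return_pmf (Some r) | Inl i \<Rightarrow> return_pmf None)"
| "exec (Suc n) s l err h = (case s h of
      Inr r \<Rightarrow> return_pmf (Some r)
    | Inl i \<Rightarrow> bind_pmf (bernoulli_pmf (err (length h) i))
                 (\<lambda>flip. exec n s l err (h @ [(l \<le> i) \<noteq> flip])))"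

definition success_prob :: "strategy pmf \<Rightarrow> nat \<Rightarrow> nat \<Rightarrow> (nat \<Rightarrow> nat \<Rightarrow> real) \<Rightarrow> real" where
  "success_prob A n l err =
     measure_pmf.prob (bind_pmf A (\<lambda>s. exec n s l err []))
       {Some r | r. l \<le> r \<and> r \<le> 2 * l}"

end

theory Submission
  imports Defs "HOL-Library.Log_Nat"
begin

(* Repeating each comparison m times and taking the majority makes it wrong with probability
   at most 1/32 (exponential Markov bound), for some m depending only on p.  On these macro
   comparisons run a walk over levels j: at level j check x_(2^(j-1)) < x_l and x_l <= x_(2^j),
   counting confirmations, and halt with output 2^j after 2j + t0 + 2 net confirmations.  A
   potential that drops by 1 on every correct macro answer and rises by at most 3 on a wrong one
   makes 2^potential shrink by 47/64 per macro step in expectation.  The potential starts at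
   O(lg l + t0) and a wrong halt lies t0 above it, so with t0 = ceil(lg(2/Q)) and O(lg(l/Q))
   macro steps the failure probability is at most 2^-t0 + 2^-t0 <= Q. *)

lemma measure_bind_pmf:
  "measure_pmf.prob (bind_pmf M f) A = (\<integral>x. measure_pmf.prob (f x) A \<partial>measure_pmf M)"
  unfolding measure_pmf_bind
  by (auto simp: measure_pmf.measure_bind[where N="count_space UNIV"] measure_subprob)

lemma expectation_le_by_event:
  fixes M :: "'a pmf" and f :: "'a \<Rightarrow> real"
  assumes fin: "finite (set_pmf M)" and AB: "A \<le> B"
    and good: "\<And>x. x \<in> set_pmf M \<Longrightarrow> x \<notin> E \<Longrightarrow> f x \<le> A"
    and bad: "\<And>x. x \<in> set_pmf M \<Longrightarrow> f x \<le> B"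
    and E: "measure_pmf.prob M E \<le> \<epsilon>"
  shows "measure_pmf.expectation M f \<le> A + (B - A) * \<epsilon>"
proof -
  have "f x \<le> A + (B - A) * indicator E x" if "x \<in> set_pmf M" for x
    using good[OF that] bad[OF that] by (cases "x \<in> E") auto
  then have "measure_pmf.expectation M f \<le> measure_pmf.expectation M (\<lambda>x. A + (B - A) * indicator E x)"
    by (intro integral_mono_AE integrable_measure_pmf_finite[OF fin]) (auto simp: AE_measure_pmf_iff)
  also have "\<dots> = A + (B - A) * measure_pmf.prob M E"
    by (subst Bochner_Integration.integral_add) (auto intro: integrable_measure_pmf_finite[OF fin])
  also have "\<dots> \<le> A + (B - A) * \<epsilon>"
    using AB E by (intro add_left_mono mult_left_mono) auto
  finally show ?thesis .
qed

lemma expectation_power2_drift: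
  fixes M :: "'a pmf" and f :: "'a \<Rightarrow> real" and g :: "'a \<Rightarrow> nat"
  assumes "finite (set_pmf M)" "0 \<le> R"
    and f: "\<And>x. x \<in> set_pmf M \<Longrightarrow> f x \<le> 2 ^ g x * R"
    and up: "\<And>x. x \<in> set_pmf M \<Longrightarrow> g x \<le> G + 3"
    and down: "\<And>x. x \<in> set_pmf M \<Longrightarrow> x \<notin> E \<Longrightarrow> g x + 1 \<le> G"
    and "measure_pmf.prob M E \<le> 1/32"
  shows "measure_pmf.expectation M f \<le> 2 ^ G * (47/64 * R)"
proof -
  have "measure_pmf.expectation M f \<le> 2 ^ G / 2 * R + (2 ^ G * 8 * R - 2 ^ G / 2 * R) * (1/32)"
  proof (rule expectation_le_by_event)
    fix x assume x: "x \<in> set_pmf M"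
    have "(2::real) ^ g x \<le> 2 ^ (G + 3)"
      using up[OF x] by (intro power_increasing) auto
    then show "f x \<le> 2 ^ G * 8 * R"
      using f[OF x] \<open>0 \<le> R\<close> mult_right_mono[of "2 ^ g x" "2 ^ G * 8" R] by (simp add: power_add)
    assume "x \<notin> E"
    have "(2::real) ^ (g x + 1) \<le> 2 ^ G"
      using down[OF x \<open>x \<notin> E\<close>] by (intro power_increasing) auto
    then show "f x \<le> 2 ^ G / 2 * R"
      using f[OF x] \<open>0 \<le> R\<close> mult_right_mono[of "2 ^ g x" "2 ^ G / 2" R] by simp
  qed (use assms in auto)
  also have "\<dots> = 2 ^ G * (47/64 * R)"
    by (simp add: field_simps)
  finally show ?thesis .
qed

section \<open>Repeated comparisons and majority votes\<close>

fun repeated_answers :: "(nat \<Rightarrow> nat \<Rightarrow> real) \<Rightarrow> nat \<Rightarrow> nat \<Rightarrow> nat \<Rightarrow> nat \<Rightarrow> bool list pmf" where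
  "repeated_answers err l i 0 k = return_pmf []"
| "repeated_answers err l i (Suc m) k = bind_pmf (bernoulli_pmf (err k i))
      (\<lambda>flip. map_pmf (\<lambda>b. ((l \<le> i) \<noteq> flip) # b) (repeated_answers err l i m (Suc k)))"

lemma length_repeated_answers: "b \<in> set_pmf (repeated_answers err l i m k) \<Longrightarrow> length b = m"
  by (induction m arbitrary: k b) auto

lemma finite_repeated_answers: "finite (set_pmf (repeated_answers err l i m k))"
  by (induction m arbitrary: k) auto

lemma exec_Inr: "s h = Inr r \<Longrightarrow> exec n s l err h = return_pmf (Some r)"
  by (cases n) auto

lemma exec_add_repeated_query:
  assumes "\<And>b. length b < m \<Longrightarrow> s (h @ b) = Inl i"
  shows "exec (m + n) s l err h
    = bind_pmf (repeated_answers err l i m (length h)) (\<lambda>b. exec n s l err (h @ b))"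
  using assms
proof (induction m arbitrary: h)
  case 0
  then show ?case by (simp add: bind_return_pmf)
next
  case (Suc m)
  have query: "s h = Inl i" using Suc.prems[of "[]"] by simp
  have IH: "exec (m + n) s l err (h @ [a])
      = bind_pmf (repeated_answers err l i m (Suc (length h))) (\<lambda>b. exec n s l err (h @ a # b))" for a
    using Suc.IH[of "h @ [a]"] Suc.prems[of "a # _"] by simp
  show ?case
    by (simp add: query IH bind_assoc_pmf bind_map_pmf)
qed

lemma prob_exec_halted_le:
  fixes \<Phi> :: nat and x :: real
  assumes "s h = Inr r'" and "Some r' \<notin> S \<Longrightarrow> D \<le> \<Phi>" and "0 \<le> x"
  shows "measure_pmf.prob (exec n s l err h) (- S) \<le> 2 ^ \<Phi> * (x + 1 / 2 ^ D)"
proof (cases "Some r' \<in> S")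
  case True
  then show ?thesis using assms by (simp add: exec_Inr)
next
  case False
  then have "(1::real) \<le> 2 ^ \<Phi> * (1 / 2 ^ D)"
    using assms(2) by (simp add: power_increasing)
  also have "\<dots> \<le> 2 ^ \<Phi> * (x + 1 / 2 ^ D)"
    using \<open>0 \<le> x\<close> by (intro mult_left_mono) auto
  finally show ?thesis
    using False assms(1) by (simp add: exec_Inr)
qed

definition count_wrong :: "bool \<Rightarrow> bool list \<Rightarrow> nat" where
  "count_wrong t b = length (filter (\<lambda>x. x \<noteq> t) b)"

lemma prob_count_wrong_ge_Suc:
  assumes "0 \<le> err k i" "err k i \<le> 1"
  shows "measure_pmf.prob (repeated_answers err l i (Suc m) k) {b. q \<le> count_wrong (l \<le> i) b}
    = err k i * measure_pmf.prob (repeated_answers err l i m (Suc k)) {b. q - 1 \<le> count_wrong (l \<le> i) b}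
      + (1 - err k i) * measure_pmf.prob (repeated_answers err l i m (Suc k)) {b. q \<le> count_wrong (l \<le> i) b}"
proof -
  have "(\<lambda>b. ((l \<le> i) \<noteq> flip) # b) -` {b. q \<le> count_wrong (l \<le> i) b}
      = {b. (if flip then q - 1 else q) \<le> count_wrong (l \<le> i) b}" for flip
    by (auto simp: count_wrong_def)
  then show ?thesis
    using assms by (simp add: measure_bind_pmf measure_map_pmf mult.commute)
qed

text \<open>Exponential Markov (Chernoff) bound: each answer contributes a factor of at most
  \<open>1 - p + p * \<theta>\<close> to the moment generating function of the number of wrong answers.\<close>
lemma prob_count_wrong_ge:
  fixes q :: nat and \<theta> :: real
  assumes err: "\<And>k. 0 \<le> err k i \<and> err k i \<le> p" and "p \<le> 1" and "1 \<le> \<theta>"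
  shows "measure_pmf.prob (repeated_answers err l i m k) {b. q \<le> count_wrong (l \<le> i) b}
    \<le> (1 - p + p * \<theta>) ^ m / \<theta> ^ q"
proof (induction m arbitrary: k q)
  case 0
  then show ?case using \<open>1 \<le> \<theta>\<close> by (cases q) (auto simp: count_wrong_def)
next
  case (Suc m)
  let ?P = "\<lambda>q. measure_pmf.prob (repeated_answers err l i m (Suc k)) {b. q \<le> count_wrong (l \<le> i) b}"
  define X where "X = 1 - p + p * \<theta>"
  define e where "e = err k i"
  have e: "0 \<le> e" "e \<le> p" "e \<le> 1" using err[of k] \<open>p \<le> 1\<close> by (auto simp: e_def)
  have X: "1 + e * (\<theta> - 1) \<le> X"
    using e \<open>1 \<le> \<theta>\<close> mult_right_mono[of e p "\<theta> - 1"] by (simp add: X_def algebra_simps)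
  have "1 \<le> X"
    using X e \<open>1 \<le> \<theta>\<close> by (smt (verit) mult_nonneg_nonneg)
  have "?P (q - 1) \<le> X ^ m / \<theta> ^ (q - 1)" "?P q \<le> X ^ m / \<theta> ^ q"
    using Suc.IH unfolding X_def by blast+
  moreover have "X ^ m / \<theta> ^ (q - 1) \<le> X ^ m / \<theta> ^ q * \<theta>"
    using \<open>1 \<le> X\<close> \<open>1 \<le> \<theta>\<close> by (cases q) auto
  ultimately have "e * ?P (q - 1) + (1 - e) * ?P q \<le> e * (X ^ m / \<theta> ^ q * \<theta>) + (1 - e) * (X ^ m / \<theta> ^ q)"
    using e by (intro add_mono mult_left_mono) auto
  also have "\<dots> = X ^ m / \<theta> ^ q * (1 + e * (\<theta> - 1))"
    by (simp add: algebra_simps add_divide_distrib[symmetric])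
  also have "\<dots> \<le> X ^ m / \<theta> ^ q * X"
    using X \<open>1 \<le> X\<close> \<open>1 \<le> \<theta>\<close> by (intro mult_left_mono) auto
  finally show ?case
    using prob_count_wrong_ge_Suc[of err k i] e by (simp add: e_def X_def mult.commute)
qed

definition majority :: "bool list \<Rightarrow> bool" where
  "majority b \<longleftrightarrow> length b < 2 * length (filter id b)"

lemma count_wrong_ge_if_majority_wrong:
  assumes "length b = 2 * a + 1" "majority b \<noteq> t"
  shows "a + 1 \<le> count_wrong t b"
proof -
  have "length (filter id b) + length (filter (\<lambda>x. \<not> id x) b) = length b"
    by (rule sum_length_filter_compl)
  moreover have "filter (\<lambda>x. \<not> id x) b = filter (\<lambda>x. x \<noteq> True) b"
    and "filter id b = filter (\<lambda>x. x \<noteq> False) b"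
    by (induction b) auto
  ultimately show ?thesis
    using assms by (cases t) (auto simp: majority_def count_wrong_def)
qed

lemma prob_majority_wrong_le:
  assumes err: "\<And>k. 0 \<le> err k i \<and> err k i \<le> q" and "0 < q" "q < 1/2"
  shows "measure_pmf.prob (repeated_answers err l i (2 * a + 1) k) {b. majority b \<noteq> (l \<le> i)}
    \<le> 2 * q * (4 * q * (1 - q)) ^ a"
proof -
  let ?M = "repeated_answers err l i (2 * a + 1) k"
  define \<theta> where "\<theta> = (1 - q) / q"
  have "1 \<le> \<theta>" and "1 - q + q * \<theta> = 2 * (1 - q)"
    using assms by (auto simp: \<theta>_def field_simps)
  have "measure_pmf.prob ?M {b. majority b \<noteq> (l \<le> i)}
      = measure_pmf.prob ?M ({b. majority b \<noteq> (l \<le> i)} \<inter> set_pmf ?M)"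
    by (rule measure_Int_set_pmf[symmetric])
  also have "\<dots> \<le> measure_pmf.prob ?M {b. a + 1 \<le> count_wrong (l \<le> i) b}"
  proof (rule measure_pmf.finite_measure_mono)
    show "{b. majority b \<noteq> (l \<le> i)} \<inter> set_pmf ?M \<subseteq> {b. a + 1 \<le> count_wrong (l \<le> i) b}"
      using count_wrong_ge_if_majority_wrong length_repeated_answers by blast
  qed simp
  also have "\<dots> \<le> (2 * (1 - q)) ^ (2 * a + 1) / \<theta> ^ (a + 1)"
    using prob_count_wrong_ge[where p = q and \<theta> = \<theta> and m = "2 * a + 1" and q = "a + 1"]
      err assms \<open>1 \<le> \<theta>\<close> \<open>1 - q + q * \<theta> = 2 * (1 - q)\<close> by simp
  also have "\<dots> = (2 * (1 - q) / \<theta>) * ((2 * (1 - q))\<^sup>2 / \<theta>) ^ a"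
    by (simp add: power_add power_mult power_divide)
  also have "2 * (1 - q) / \<theta> = 2 * q"
    using assms by (simp add: \<theta>_def field_simps)
  also have "(2 * (1 - q))\<^sup>2 / \<theta> = 4 * q * (1 - q)"
    using assms by (simp add: \<theta>_def power2_eq_square field_simps)
  finally show ?thesis .
qed

lemma exists_reliable_majority_length:
  assumes "0 \<le> p" "p < 1/2"
  shows "\<exists>m>0. \<forall>(err :: nat \<Rightarrow> nat \<Rightarrow> real) l i k. (\<forall>k. 0 \<le> err k i \<and> err k i \<le> p) \<longrightarrow>
    measure_pmf.prob (repeated_answers err l i m k) {b. majority b \<noteq> (l \<le> i)} \<le> 1/32"
proof -
  define q where "q = max p (1/4)"
  have q: "0 < q" "q < 1/2" "p \<le> q" using assms by (auto simp: q_def)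
  have "4 * q * (1 - q) = 1 - (1 - 2 * q)\<^sup>2"
    by (simp add: power2_eq_square algebra_simps)
  moreover have "0 < (1 - 2 * q)\<^sup>2" using q by simp
  ultimately have "4 * q * (1 - q) < 1" by linarith
  then obtain a where a: "(4 * q * (1 - q)) ^ a < 1/32"
    using real_arch_pow_inv[of "1/32" "4 * q * (1 - q)"] by auto
  have small: "2 * q * (4 * q * (1 - q)) ^ a \<le> 1/32"
    using q a mult_mono[of "2 * q" 1 "(4 * q * (1 - q)) ^ a" "1/32"] by simp
  show ?thesis
  proof (intro exI[of _ "2 * a + 1"] conjI allI impI)
    fix err :: "nat \<Rightarrow> nat \<Rightarrow> real" and l i k :: nat
    assume err: "\<forall>k. 0 \<le> err k i \<and> err k i \<le> p"
    have "\<And>k. 0 \<le> err k i \<and> err k i \<le> q" using err \<open>p \<le> q\<close> by (meson order_trans)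
    then have "measure_pmf.prob (repeated_answers err l i (2 * a + 1) k) {b. majority b \<noteq> (l \<le> i)}
        \<le> 2 * q * (4 * q * (1 - q)) ^ a"
      using q(1,2) by (rule prob_majority_wrong_le)
    then show "measure_pmf.prob (repeated_answers err l i (2 * a + 1) k) {b. majority b \<noteq> (l \<le> i)} \<le> 1/32"
      using small by linarith
  qed simp
qed

section \<open>Strategies driven by majority votes\<close>

definition majorities :: "nat \<Rightarrow> bool list \<Rightarrow> bool list" where
  "majorities m h = map (\<lambda>k. majority (take m (drop (k * m) h))) [0..<length h div m]"

lemma majorities_append:
  assumes "m dvd length h"
  shows "majorities m (h @ b) = majorities m h @ majorities m b"
proof (cases "m = 0")
  case True
  then show ?thesis using assms by (simp add: majorities_def)
next
  case False
  obtain k where k: "length h = k * m" using assms by (metis dvd_def mult.commute)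
  define chunk where "chunk c j = majority (take m (drop (j * m) c))" for c j
  have maj: "majorities m c = map (chunk c) [0..<length c div m]" for c
    by (simp add: majorities_def chunk_def)
  have "chunk (h @ b) j = chunk h j" if "j \<in> set [0..<k]" for j
  proof -
    have "m \<le> length h - j * m"
      using that k by (simp add: diff_mult_distrib[symmetric] le_diff_conv2)
    then show ?thesis by (simp add: chunk_def)
  qed
  then have "map (chunk (h @ b)) [0..<k] = map (chunk h) [0..<k]"
    by (rule map_cong[OF refl])
  moreover have "chunk (h @ b) (j + k) = chunk b j" for j
  proof -
    have "drop ((j + k) * m) (h @ b) = drop (j * m) b"
      using k by (simp add: add_mult_distrib)
    then show ?thesis by (simp only: chunk_def)
  qed
  moreover have "[0..<length (h @ b) div m] = [0..<k] @ map (\<lambda>j. j + k) [0..<length b div m]"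
  proof -
    have "length (h @ b) div m = k + length b div m"
      using k False by simp
    then show ?thesis
      using upt_add_eq_append[of 0 k "length b div m"] map_add_upt[of k "length b div m"]
      by (simp add: add.commute)
  qed
  ultimately show ?thesis
    using k False by (simp add: maj comp_def)
qed

lemma majorities_short: "length b < m \<Longrightarrow> majorities m b = []"
  by (simp add: majorities_def)

lemma majorities_block: "length b = m \<Longrightarrow> 0 < m \<Longrightarrow> majorities m b = [majority b]"
  by (simp add: majorities_def)

definition majority_strategy :: "nat \<Rightarrow> ('s \<Rightarrow> bool \<Rightarrow> 's) \<Rightarrow> 's \<Rightarrow> ('s \<Rightarrow> nat + nat) \<Rightarrow> strategy" where
  "majority_strategy m \<delta> \<sigma>\<^sub>0 out h = out (foldl \<delta> \<sigma>\<^sub>0 (majorities m h))"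

lemma majority_strategy_failure_le:
  fixes \<delta> :: "'s \<Rightarrow> bool \<Rightarrow> 's" and \<Phi> :: "'s \<Rightarrow> nat" and S :: "nat option set"
  assumes "0 < m"
    and majority_err: "\<And>i k. measure_pmf.prob (repeated_answers err l i m k) {b. majority b \<noteq> (l \<le> i)} \<le> 1/32"
    and invariant: "\<And>\<sigma> t. I \<sigma> \<Longrightarrow> I (\<delta> \<sigma> t)"
    and drift_correct: "\<And>\<sigma> i. I \<sigma> \<Longrightarrow> out \<sigma> = Inl i \<Longrightarrow> \<Phi> (\<delta> \<sigma> (l \<le> i)) + 1 \<le> \<Phi> \<sigma>"
    and drift_wrong: "\<And>\<sigma> i. I \<sigma> \<Longrightarrow> out \<sigma> = Inl i \<Longrightarrow> \<Phi> (\<delta> \<sigma> (\<not> l \<le> i)) \<le> \<Phi> \<sigma> + 3"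
    and halt_wrong: "\<And>\<sigma> r. out \<sigma> = Inr r \<Longrightarrow> Some r \<notin> S \<Longrightarrow> D \<le> \<Phi> \<sigma>"
  shows "m dvd length h \<Longrightarrow> I (foldl \<delta> \<sigma>\<^sub>0 (majorities m h)) \<Longrightarrow>
    measure_pmf.prob (exec (m * n + r) (majority_strategy m \<delta> \<sigma>\<^sub>0 out) l err h) (- S)
      \<le> 2 ^ \<Phi> (foldl \<delta> \<sigma>\<^sub>0 (majorities m h)) * ((3/4) ^ n + 1 / 2 ^ D)"
proof (induction n arbitrary: h)
  case 0
  have one_le: "(1::real) \<le> 2 ^ \<Phi> (foldl \<delta> \<sigma>\<^sub>0 (majorities m h)) * (1 + 1 / 2 ^ D)"
    by (rule order_trans[OF _ mult_mono[of 1 _ 1]]) auto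
  show ?case
    using order_trans[OF measure_pmf.prob_le_1 one_le] by simp
next
  case (Suc n)
  let ?s = "majority_strategy m \<delta> \<sigma>\<^sub>0 out"
  define \<sigma> where "\<sigma> = foldl \<delta> \<sigma>\<^sub>0 (majorities m h)"
  define R :: real where "R = (3/4) ^ n + 1 / 2 ^ D"
  have "0 \<le> R" by (simp add: R_def)
  show ?case
  proof (cases "out \<sigma>")
    case (Inr r')
    then have "?s h = Inr r'"
      by (simp add: majority_strategy_def \<sigma>_def)
    then show ?thesis
      unfolding \<sigma>_def[symmetric] by (rule prob_exec_halted_le) (use halt_wrong[OF Inr] in auto)
  next
    case (Inl i)
    let ?M = "repeated_answers err l i m (length h)"
    have "exec (m + (m * n + r)) ?s l err h = bind_pmf ?M (\<lambda>b. exec (m * n + r) ?s l err (h @ b))"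
      using Inl Suc.prems(1)
      by (intro exec_add_repeated_query) (simp add: majority_strategy_def majorities_append majorities_short \<sigma>_def)
    then have "measure_pmf.prob (exec (m * Suc n + r) ?s l err h) (- S)
        = measure_pmf.expectation ?M (\<lambda>b. measure_pmf.prob (exec (m * n + r) ?s l err (h @ b)) (- S))"
      by (simp add: measure_bind_pmf add.assoc)
    also have "\<dots> \<le> 2 ^ \<Phi> \<sigma> * (47/64 * R)"
    proof (rule expectation_power2_drift[OF finite_repeated_answers \<open>0 \<le> R\<close> _ _ _ majority_err])
      have "I \<sigma>" using Suc.prems(2) by (simp add: \<sigma>_def)
      fix b assume "b \<in> set_pmf ?M"
      then have "length b = m" by (rule length_repeated_answers)
      then have "m dvd length (h @ b)" and "foldl \<delta> \<sigma>\<^sub>0 (majorities m (h @ b)) = \<delta> \<sigma> (majority b)"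
        using Suc.prems(1) \<open>0 < m\<close> by (simp_all add: majorities_append majorities_block \<sigma>_def)
      then show "measure_pmf.prob (exec (m * n + r) ?s l err (h @ b)) (- S) \<le> 2 ^ \<Phi> (\<delta> \<sigma> (majority b)) * R"
        using Suc.IH[of "h @ b"] Suc.prems(2) invariant by (simp add: R_def \<sigma>_def)
      show "\<Phi> (\<delta> \<sigma> (majority b)) \<le> \<Phi> \<sigma> + 3"
        using drift_correct[OF \<open>I \<sigma>\<close> Inl] drift_wrong[OF \<open>I \<sigma>\<close> Inl] by (cases "majority b = (l \<le> i)") auto
      assume "b \<notin> {b. majority b \<noteq> (l \<le> i)}"
      then show "\<Phi> (\<delta> \<sigma> (majority b)) + 1 \<le> \<Phi> \<sigma>"
        using drift_correct[OF \<open>I \<sigma>\<close> Inl] by simp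
    qed
    also have "\<dots> \<le> 2 ^ \<Phi> \<sigma> * ((3/4) ^ Suc n + 1 / 2 ^ D)"
    proof -
      have "0 \<le> (3/4::real) ^ n" "0 \<le> 1 / (2::real) ^ D" by simp_all
      then have "47/64 * R \<le> (3/4) ^ Suc n + 1 / 2 ^ D"
        unfolding R_def power_Suc distrib_left by linarith
      then show ?thesis by (intro mult_left_mono) auto
    qed
    finally show ?thesis by (simp add: \<sigma>_def)
  qed
qed

section \<open>The doubling walk\<close>

text \<open>In state \<open>Search j c upper\<close> the walk is at level \<open>j\<close> with \<open>c\<close> confirmations, and
  next compares the target with \<open>x\<^bsub>2^j\<^esub>\<close> if \<open>upper\<close>, else with \<open>x\<^bsub>2^(j-1)\<^esub>\<close> (at level 0 with
  \<open>x\<^sub>0\<close>, which always lies before the target).\<close>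
datatype walk_state = Search nat nat bool | Halt nat

definition halt_threshold :: "nat \<Rightarrow> nat \<Rightarrow> nat" where
  "halt_threshold t\<^sub>0 j = 2 * j + t\<^sub>0 + 2"

fun walk_step :: "nat \<Rightarrow> walk_state \<Rightarrow> bool \<Rightarrow> walk_state" where
  "walk_step t\<^sub>0 (Search j c False) a =
    (if \<not> a then Search j c True else if 0 < c then Search j (c - 1) False else Search (j - 1) 0 False)"
| "walk_step t\<^sub>0 (Search j c True) a =
    (if a then (if halt_threshold t\<^sub>0 j \<le> c + 1 then Halt (2 ^ j) else Search j (c + 1) False)
     else if 0 < c then Search j (c - 1) False else Search (j + 1) 0 False)"
| "walk_step t\<^sub>0 (Halt r) a = Halt r"

fun walk_action :: "walk_state \<Rightarrow> nat + nat" where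
  "walk_action (Search j c upper) = Inl (if upper then 2 ^ j else 2 ^ j div 2)"
| "walk_action (Halt r) = Inr r"

fun walk_valid :: "nat \<Rightarrow> walk_state \<Rightarrow> bool" where
  "walk_valid t\<^sub>0 (Search j c upper) \<longleftrightarrow> c < halt_threshold t\<^sub>0 j"
| "walk_valid t\<^sub>0 (Halt r) \<longleftrightarrow> True"

text \<open>Roughly the number of correct answers still needed to halt at the right level
  \<open>J = ceillog2 l\<close>.  A wrong halt sits \<open>t\<^sub>0\<close> above the initial potential.\<close>
fun walk_potential :: "nat \<Rightarrow> nat \<Rightarrow> walk_state \<Rightarrow> nat" where
  "walk_potential J t\<^sub>0 (Search j c upper) =
    (if j = J then 2 * (halt_threshold t\<^sub>0 J - c) - (if upper then 1 else 0)
     else if j < J then 2 * (J - j) + 2 * halt_threshold t\<^sub>0 J + 2 * c - (if upper then 1 else 0)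
     else (j - J) + 2 * halt_threshold t\<^sub>0 J + c + (if upper then 2 else 0))"
| "walk_potential J t\<^sub>0 (Halt r) = (if r = 2 ^ J then 0 else 2 * J + 2 * halt_threshold t\<^sub>0 J + t\<^sub>0)"

lemma walk_valid_step: "walk_valid t\<^sub>0 \<sigma> \<Longrightarrow> walk_valid t\<^sub>0 (walk_step t\<^sub>0 \<sigma> a)"
  by (cases "(t\<^sub>0, \<sigma>, a)" rule: walk_step.cases) (auto simp: halt_threshold_def)

lemma le_power2_div2_iff_ceillog2_less:
  assumes "0 < l"
  shows "l \<le> 2 ^ j div 2 \<longleftrightarrow> ceillog2 l < j"
proof (cases j)
  case 0
  then show ?thesis using assms by simp
next
  case (Suc j')
  then show ?thesis using ceillog2_le_iff[OF assms, of j'] by (simp add: less_Suc_eq_le)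
qed

lemma walk_potential_drift:
  assumes "0 < l" "walk_valid t\<^sub>0 \<sigma>" "walk_action \<sigma> = Inl i"
  shows walk_potential_correct:
      "walk_potential (ceillog2 l) t\<^sub>0 (walk_step t\<^sub>0 \<sigma> (l \<le> i)) + 1 \<le> walk_potential (ceillog2 l) t\<^sub>0 \<sigma>"
    and walk_potential_wrong:
      "walk_potential (ceillog2 l) t\<^sub>0 (walk_step t\<^sub>0 \<sigma> (\<not> l \<le> i)) \<le> walk_potential (ceillog2 l) t\<^sub>0 \<sigma> + 3"
proof -
  obtain j c upper where \<sigma>: "\<sigma> = Search j c upper"
    using assms(3) by (cases \<sigma>) auto
  have "l \<le> 2 ^ j \<longleftrightarrow> ceillog2 l \<le> j" "l \<le> 2 ^ j div 2 \<longleftrightarrow> ceillog2 l < j"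
    using ceillog2_le_iff[OF \<open>0 < l\<close>] le_power2_div2_iff_ceillog2_less[OF \<open>0 < l\<close>] by simp_all
  then show "walk_potential (ceillog2 l) t\<^sub>0 (walk_step t\<^sub>0 \<sigma> (l \<le> i)) + 1 \<le> walk_potential (ceillog2 l) t\<^sub>0 \<sigma>"
    and "walk_potential (ceillog2 l) t\<^sub>0 (walk_step t\<^sub>0 \<sigma> (\<not> l \<le> i)) \<le> walk_potential (ceillog2 l) t\<^sub>0 \<sigma> + 3"
    using assms \<sigma> by (cases upper; auto simp: halt_threshold_def)+
qed

definition search_strategy :: "nat \<Rightarrow> nat \<Rightarrow> strategy" where
  "search_strategy m t\<^sub>0 = majority_strategy m (walk_step t\<^sub>0) (Search 0 0 False) walk_action"

lemma search_strategy_failure_le: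
  assumes "0 < m" "0 < l"
    and majority_err: "\<And>i k. measure_pmf.prob (repeated_answers err l i m k) {b. majority b \<noteq> (l \<le> i)} \<le> 1/32"
  shows "measure_pmf.prob (exec (m * n + k) (search_strategy m t\<^sub>0) l err []) (- {Some r | r. l \<le> r \<and> r \<le> 2 * l})
    \<le> 2 ^ (6 * ceillog2 l + 2 * t\<^sub>0 + 4) * (3/4) ^ n + 1 / 2 ^ t\<^sub>0"
proof -
  let ?J = "ceillog2 l"
  let ?D = "2 * ?J + 2 * halt_threshold t\<^sub>0 ?J + t\<^sub>0"
  have "l \<le> 2 ^ ?J" "2 ^ ?J \<le> 2 * l"
    using le_two_power_ceillog2[of l] two_power_ceillog2_gt[OF \<open>0 < l\<close>] by simp_all
  have "measure_pmf.prob (exec (m * n + k) (search_strategy m t\<^sub>0) l err []) (- {Some r | r. l \<le> r \<and> r \<le> 2 * l})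
      \<le> 2 ^ walk_potential ?J t\<^sub>0 (foldl (walk_step t\<^sub>0) (Search 0 0 False) (majorities m []))
        * ((3/4) ^ n + 1 / 2 ^ ?D)"
    unfolding search_strategy_def
  proof (rule majority_strategy_failure_le[where I = "walk_valid t\<^sub>0" and \<Phi> = "walk_potential ?J t\<^sub>0"])
    show "walk_potential ?J t\<^sub>0 (walk_step t\<^sub>0 \<sigma> (l \<le> i)) + 1 \<le> walk_potential ?J t\<^sub>0 \<sigma>"
      if "walk_valid t\<^sub>0 \<sigma>" "walk_action \<sigma> = Inl i" for \<sigma> i
      using walk_potential_correct[OF \<open>0 < l\<close> that] .
    show "walk_potential ?J t\<^sub>0 (walk_step t\<^sub>0 \<sigma> (\<not> l \<le> i)) \<le> walk_potential ?J t\<^sub>0 \<sigma> + 3"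
      if "walk_valid t\<^sub>0 \<sigma>" "walk_action \<sigma> = Inl i" for \<sigma> i
      using walk_potential_wrong[OF \<open>0 < l\<close> that] .
    show "?D \<le> walk_potential ?J t\<^sub>0 \<sigma>"
      if "walk_action \<sigma> = Inr r" "Some r \<notin> {Some r | r. l \<le> r \<and> r \<le> 2 * l}" for \<sigma> r
      using that \<open>l \<le> 2 ^ ?J\<close> \<open>2 ^ ?J \<le> 2 * l\<close> by (cases \<sigma>) auto
  qed (use \<open>0 < m\<close> majority_err walk_valid_step in \<open>auto simp: majorities_def halt_threshold_def\<close>)
  also have "walk_potential ?J t\<^sub>0 (foldl (walk_step t\<^sub>0) (Search 0 0 False) (majorities m []))
      = 6 * ?J + 2 * t\<^sub>0 + 4"
    by (simp add: majorities_def halt_threshold_def)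
  also have "?D = (6 * ?J + 2 * t\<^sub>0 + 4) + t\<^sub>0"
    by (simp add: halt_threshold_def)
  also have "(2::real) ^ (6 * ?J + 2 * t\<^sub>0 + 4) * ((3/4) ^ n + 1 / 2 ^ (6 * ?J + 2 * t\<^sub>0 + 4 + t\<^sub>0))
      = 2 ^ (6 * ?J + 2 * t\<^sub>0 + 4) * (3/4) ^ n + 1 / 2 ^ t\<^sub>0"
    by (simp only: distrib_left power_add) simp
  finally show ?thesis .
qed

lemma power_three_quarters_le: "(3/4::real) ^ n \<le> 1 / 2 ^ (n div 3)"
proof -
  have "(3/4::real) ^ n \<le> (3/4) ^ (3 * (n div 3))"
    by (intro power_decreasing) auto
  also have "\<dots> = ((3/4) ^ 3) ^ (n div 3)"
    by (simp add: power_mult)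
  also have "\<dots> \<le> (1/2) ^ (n div 3)"
    by (intro power_mono) (auto simp: eval_nat_numeral)
  finally show ?thesis
    by (simp add: power_divide)
qed

lemma div_ge_divide_sub_one: "real x / real b - 1 \<le> real (x div b)"
  using divide_nat_diff_div_nat_less_one[of x b] by linarith

lemma macro_steps_ge:
  assumes "0 < m" "0 \<le> y"
  shows "y - 2 \<le> real (nat \<lfloor>real m * y\<rfloor> div m)"
proof -
  define N where "N = nat \<lfloor>real m * y\<rfloor>"
  have "real N = of_int \<lfloor>real m * y\<rfloor>"
    using assms by (simp add: N_def)
  then have "real m * y - 1 \<le> real N"
    by linarith
  then have "(real m * y - 1) / real m \<le> real N / real m"
    using assms by (intro divide_right_mono) auto
  moreover have "(real m * y - 1) / real m = y - 1 / real m"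
    using assms by (simp add: diff_divide_distrib)
  moreover have "1 / real m \<le> 1"
    using assms by simp
  ultimately show ?thesis
    using div_ge_divide_sub_one[of N m] by (simp add: N_def[symmetric])
qed

lemma ceillog2_and_confidence_le_budget:
  assumes "0 < l" "0 < Q" "Q < 1/2" "70 * log 2 (real l / Q) - 2 \<le> real n"
  shows "6 * ceillog2 l + 3 * nat \<lceil>log 2 (2 / Q)\<rceil> + 4 \<le> n div 3"
proof -
  define M where "M = - log 2 Q"
  have "log 2 Q < log 2 (1/2)"
    using assms by simp
  then have "1 < M"
    by (simp add: M_def log_divide)
  have "log 2 (2 / Q) = 1 + M" and "log 2 (real l / Q) = log 2 l + M"
    using assms by (simp_all add: M_def log_divide)
  then have "real (nat \<lceil>log 2 (2 / Q)\<rceil>) \<le> M + 2"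
    using \<open>1 < M\<close> by linarith
  moreover have "real (ceillog2 l) \<le> log 2 l + 1" "0 \<le> log 2 l"
    using ceillog2_less_log[OF \<open>0 < l\<close>] \<open>0 < l\<close> by simp_all
  ultimately have "real (6 * ceillog2 l + 3 * nat \<lceil>log 2 (2 / Q)\<rceil> + 4) \<le> real (n div 3)"
    using assms(4) \<open>log 2 (real l / Q) = log 2 l + M\<close> \<open>1 < M\<close> div_ge_divide_sub_one[of n 3] by simp
  then show ?thesis
    by linarith
qed

lemma power2_mult_three_quarters_le:
  assumes "a + t \<le> n div 3"
  shows "(2::real) ^ a * (3/4) ^ n \<le> 1 / 2 ^ t"
proof -
  have "(3/4::real) ^ n \<le> 1 / 2 ^ (n div 3)"
    by (rule power_three_quarters_le)
  also have "\<dots> \<le> 1 / 2 ^ (a + t)"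
    using assms by (intro divide_left_mono power_increasing) auto
  finally have "(2::real) ^ a * (3/4) ^ n \<le> 2 ^ a * (1 / 2 ^ (a + t))"
    by (rule mult_left_mono) simp
  then show ?thesis
    by (simp add: power_add)
qed

lemma inverse_power2_ceiling_log_le:
  assumes "0 < Q"
  shows "1 / 2 ^ nat \<lceil>log 2 (2 / Q)\<rceil> \<le> Q / 2"
proof -
  have "log 2 (2 / Q) \<le> real (nat \<lceil>log 2 (2 / Q)\<rceil>)"
    by linarith
  then have "2 powr log 2 (2 / Q) \<le> 2 powr real (nat \<lceil>log 2 (2 / Q)\<rceil>)"
    by (intro powr_mono) auto
  then have "2 / Q \<le> 2 ^ nat \<lceil>log 2 (2 / Q)\<rceil>"
    using assms by (simp add: powr_realpow)
  then show ?thesis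
    using assms by (simp add: field_simps)
qed

lemma search_strategy_success:
  assumes "0 < m" "0 < l" "0 < Q" "Q < 1/2"
    and majority_err: "\<And>i k. measure_pmf.prob (repeated_answers err l i m k) {b. majority b \<noteq> (l \<le> i)} \<le> 1/32"
  defines "t\<^sub>0 \<equiv> nat \<lceil>log 2 (2 / Q)\<rceil>"
  shows "1 - Q \<le> success_prob (return_pmf (search_strategy m t\<^sub>0)) (nat \<lfloor>70 * real m * log 2 (real l / Q)\<rfloor>) l err"
proof -
  define N where "N = nat \<lfloor>70 * real m * log 2 (real l / Q)\<rfloor>"
  define S where "S = {Some r | r. l \<le> r \<and> r \<le> 2 * l}"
  have "0 \<le> log 2 (real l / Q)"
    using assms by simp
  then have "70 * log 2 (real l / Q) - 2 \<le> real (N div m)"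
    using macro_steps_ge[OF \<open>0 < m\<close>, of "70 * log 2 (real l / Q)"] by (simp add: N_def mult_ac)
  then have "6 * ceillog2 l + 3 * t\<^sub>0 + 4 \<le> N div m div 3"
    unfolding t\<^sub>0_def using assms by (intro ceillog2_and_confidence_le_budget)
  then have "(2::real) ^ (6 * ceillog2 l + 2 * t\<^sub>0 + 4) * (3/4) ^ (N div m) \<le> 1 / 2 ^ t\<^sub>0"
    by (intro power2_mult_three_quarters_le) simp
  moreover have "1 / 2 ^ t\<^sub>0 \<le> Q / 2"
    unfolding t\<^sub>0_def using \<open>0 < Q\<close> by (rule inverse_power2_ceiling_log_le)
  ultimately have "measure_pmf.prob (exec (m * (N div m) + N mod m) (search_strategy m t\<^sub>0) l err []) (- S) \<le> Q"
    using search_strategy_failure_le[OF \<open>0 < m\<close> \<open>0 < l\<close> majority_err, of "N div m" "N mod m" t\<^sub>0]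
    unfolding S_def by linarith
  then show ?thesis
    using measure_pmf.prob_compl[of S "exec N (search_strategy m t\<^sub>0) l err []"]
    by (simp add: success_prob_def bind_return_pmf N_def[symmetric] S_def[symmetric] Compl_eq_Diff_UNIV)
qed

theorem lemma3:
  fixes p :: real
  assumes "0 \<le> p" and "p < 1/2"
  shows "\<exists>C>0. \<forall>Q::real. 0 < Q \<and> Q < 1/2 \<longrightarrow>
           (\<exists>A :: strategy pmf. \<forall>l::nat. \<forall>err :: nat \<Rightarrow> nat \<Rightarrow> real.
              1 \<le> l \<and> (\<forall>k i. 0 \<le> err k i \<and> err k i \<le> p) \<longrightarrow>
              success_prob A (nat \<lfloor>C * log 2 (real l / Q)\<rfloor>) l err \<ge> 1 - Q)"
proof -
  obtain m where "0 < m" and reliable: "\<forall>(err :: nat \<Rightarrow> nat \<Rightarrow> real) l i k. (\<forall>k. 0 \<le> err k i \<and> err k i \<le> p) \<longrightarrow>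
      measure_pmf.prob (repeated_answers err l i m k) {b. majority b \<noteq> (l \<le> i)} \<le> 1/32"
    using exists_reliable_majority_length[OF assms] by blast
  show ?thesis
  proof (intro exI[of _ "70 * real m"] conjI allI impI)
    fix Q :: real
    assume Q: "0 < Q \<and> Q < 1/2"
    show "\<exists>A. \<forall>l err. 1 \<le> l \<and> (\<forall>k i. 0 \<le> err k i \<and> err k i \<le> p) \<longrightarrow>
        1 - Q \<le> success_prob A (nat \<lfloor>70 * real m * log 2 (real l / Q)\<rfloor>) l err"
    proof (intro exI[of _ "return_pmf (search_strategy m (nat \<lceil>log 2 (2 / Q)\<rceil>))"] allI impI)
      fix l :: nat and err :: "nat \<Rightarrow> nat \<Rightarrow> real"
      assume "1 \<le> l \<and> (\<forall>k i. 0 \<le> err k i \<and> err k i \<le> p)"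
      then show "1 - Q \<le> success_prob (return_pmf (search_strategy m (nat \<lceil>log 2 (2 / Q)\<rceil>)))
          (nat \<lfloor>70 * real m * log 2 (real l / Q)\<rfloor>) l err"
        using Q reliable by (intro search_strategy_success[OF \<open>0 < m\<close>]) auto
    qed
  qed (use \<open>0 < m\<close> in simp)
qed

end
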